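(* Let $n$ be an odd positive integer and let $\mathcal{B}$ be a balanced bipartite graph on $2n$ vertices with parts $V_1$ and $V_2$ such that $\delta(\mathcal{B})\geq\frac{n+1}{2}$. Suppose that each of $V_1$ and $V_2$ contains at most one vertex of degree exactly $\frac{n+1}{2}$, i.e. $\max\{|\{v\in V_1: d_{\mathcal{B}}(v)=\frac{n+1}{2}\}|,\ |\{u\in V_2: d_{\mathcal{B}}(u)=\frac{n+1}{2}\}|\}\leq 1$. Then $f(\mathcal{B})=n+1$.
   Context: All graphs are finite and simple. A balanced bipartite graph on $2n$ vertices is a bipartite graph with a given bipartition $(V_1,V_2)$ where $|V_1|=|V_2|=n$. $d_G(v)$ is the degree of $v$ and $\delta(G)$ the minimum degree of $G$. The forest number $f(G)$ is the maximum cardinality of a subset $S\subseteq V(G)$ such that the induced subgraph $G[S]$ is a forest. *)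

theory Defs
  imports Main
begin

definition simple_graph :: "'a set \<Rightarrow> ('a \<Rightarrow> 'a \<Rightarrow> bool) \<Rightarrow> bool" where
  "simple_graph V E \<longleftrightarrow> finite V \<and> (\<forall>u v. E u v \<longrightarrow> u \<in> V \<and> v \<in> V)
     \<and> (\<forall>u v. E u v \<longrightarrow> E v u) \<and> (\<forall>v. \<not> E v v)"

definition balanced_bipartite :: "'a set \<Rightarrow> 'a set \<Rightarrow> ('a \<Rightarrow> 'a \<Rightarrow> bool) \<Rightarrow> nat \<Rightarrow> bool" where
  "balanced_bipartite V1 V2 E n \<longleftrightarrow> simple_graph (V1 \<union> V2) E \<and> V1 \<inter> V2 = {}
     \<and> card V1 = n \<and> card V2 = n
     \<and> (\<forall>u v. E u v \<longrightarrow> (u \<in> V1 \<and> v \<in> V2) \<or> (u \<in> V2 \<and> v \<in> V1))"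

definition degree :: "'a set \<Rightarrow> ('a \<Rightarrow> 'a \<Rightarrow> bool) \<Rightarrow> 'a \<Rightarrow> nat" where
  "degree V E v = card {u \<in> V. E v u}"

definition min_degree :: "'a set \<Rightarrow> ('a \<Rightarrow> 'a \<Rightarrow> bool) \<Rightarrow> nat" where
  "min_degree V E = Min (degree V E ` V)"

definition is_cycle_in :: "'a set \<Rightarrow> ('a \<Rightarrow> 'a \<Rightarrow> bool) \<Rightarrow> 'a list \<Rightarrow> bool" where
  "is_cycle_in S E cs \<longleftrightarrow> length cs \<ge> 3 \<and> distinct cs \<and> set cs \<subseteq> S
     \<and> (\<forall>i. Suc i < length cs \<longrightarrow> E (cs ! i) (cs ! Suc i))
     \<and> E (last cs) (hd cs)"

definition induces_forest :: "'a set \<Rightarrow> ('a \<Rightarrow> 'a \<Rightarrow> bool) \<Rightarrow> 'a set \<Rightarrow> bool" where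
  "induces_forest V E S \<longleftrightarrow> S \<subseteq> V \<and> \<not> (\<exists>cs. is_cycle_in S E cs)"

definition forest_number :: "'a set \<Rightarrow> ('a \<Rightarrow> 'a \<Rightarrow> bool) \<Rightarrow> nat" where
  "forest_number V E = Max (card ` {S. induces_forest V E S})"

end

theory Submission
  imports Defs
begin

text \<open>
  Lower bound: one side together with a single vertex of the other side induces a star plus
  isolated vertices. Upper bound: among any \<open>n + 2\<close> vertices, let \<open>A\<close> be the smaller
  side, of size \<open>s \<le> (n + 1) / 2\<close>, and \<open>B\<close> the rest. The degree hypotheses give
  \<open>\<Sum>\<^sub>A d \<ge> s (n + 3) / 2 - 1\<close>, and each vertex of \<open>A\<close> has at most \<open>s - 2\<close> neighbours
  outside \<open>B\<close>, so there are at least \<open>n + 2 + (s - 2)(n + 3 - 2 s) / 2 \<ge> n + 2\<close> edges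
  inside. A graph with at least as many edges as vertices contains a cycle.
\<close>

lemma is_cycle_in_mono: "is_cycle_in S E cs \<Longrightarrow> S \<subseteq> T \<Longrightarrow> is_cycle_in T E cs"
  unfolding is_cycle_in_def by auto

lemma is_cycle_in_adj_mod:
  assumes "is_cycle_in S E cs" and "i < length cs"
  shows "E (cs ! i) (cs ! (Suc i mod length cs))"
proof (cases "Suc i < length cs")
  case True
  then show ?thesis using assms(1) unfolding is_cycle_in_def by auto
next
  case False
  then have i: "Suc i = length cs" using assms(2) by simp
  have "cs \<noteq> []" using assms(2) by auto
  then have "last cs = cs ! i" and "hd cs = cs ! 0"
    by (simp_all add: last_conv_nth hd_conv_nth flip: i)
  then show ?thesis using assms(1) i unfolding is_cycle_in_def by auto
qed

text \<open>A cycle has at least three edges, but a vertex lies on only two of them.\<close>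

lemma no_cycle_if_edges_through:
  assumes through: "\<And>x y. x \<in> W \<Longrightarrow> y \<in> W \<Longrightarrow> E x y \<Longrightarrow> x = b \<or> y = b"
  shows "\<not> is_cycle_in W E cs"
proof
  assume cyc: "is_cycle_in W E cs"
  define k where "k = length cs"
  have k: "3 \<le> k" and dist: "distinct cs" and sub: "set cs \<subseteq> W"
    using cyc unfolding is_cycle_in_def k_def by auto
  have edge: "cs ! i = b \<or> cs ! (Suc i mod k) = b" if "i < k" for i
  proof -
    have "Suc i mod k < k" using k by simp
    then show ?thesis
      using through sub nth_mem that is_cycle_in_adj_mod[OF cyc] unfolding k_def by blast
  qed
  have inj: "cs ! i = cs ! j \<longleftrightarrow> i = j" if "i < k" "j < k" for i j
    using dist that nth_eq_iff_index_eq unfolding k_def by blast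
  have "cs ! 1 = b"
    using edge[of 0] edge[of 1] inj[of 0 2] k by (auto simp: numeral_2_eq_2)
  moreover have "Suc 2 mod k \<noteq> 1" using k by (cases "k = 3") auto
  ultimately show False
    using edge[of 2] inj[of 1 2] inj[of 1 "Suc 2 mod k"] k by auto
qed

text \<open>The first vertex of a longest path has a second neighbour, which closes a cycle.\<close>

lemma has_cycle_if_degree_ge_2:
  assumes fin: "finite S" and sym: "\<And>u v. E u v \<Longrightarrow> E v u" and irr: "\<And>v. \<not> E v v"
    and deg: "\<And>v. v \<in> S \<Longrightarrow> 2 \<le> degree S E v" and ne: "S \<noteq> {}"
  shows "\<exists>cs. is_cycle_in S E cs"
proof -
  define path where "path xs \<longleftrightarrow> xs \<noteq> [] \<and> distinct xs \<and> set xs \<subseteq> S \<and>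
     (\<forall>i. Suc i < length xs \<longrightarrow> E (xs ! i) (xs ! Suc i))" for xs
  define has_path where "has_path m \<longleftrightarrow> (\<exists>xs. path xs \<and> length xs = m)" for m
  obtain v where "v \<in> S" using ne by auto
  then have "has_path 1" unfolding has_path_def path_def by (intro exI[of _ "[v]"]) auto
  moreover have "\<forall>m. has_path m \<longrightarrow> m \<le> card S"
    unfolding has_path_def path_def using fin by (metis card_mono distinct_card)
  ultimately obtain m where "has_path m" and longest: "\<And>m'. has_path m' \<Longrightarrow> m' \<le> m"
    using Nat.ex_has_greatest_nat[of has_path 1 "card S"] by blast
  then obtain xs where xs: "path xs" "length xs = m" unfolding has_path_def by blast
  have "xs ! 0 \<in> S" using xs(1) unfolding path_def by (simp add: subset_iff)
  then have "\<not> {u \<in> S. E (xs ! 0) u} \<subseteq> {xs ! 1}"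
    using deg[of "xs ! 0"] unfolding degree_def
    by (metis (no_types, lifting) card.empty card.insert card_mono empty_iff finite.intros
        not_less_eq_eq numeral_2_eq_2)
  then obtain u where u: "u \<in> S" "E (xs ! 0) u" "u \<noteq> xs ! 1" by auto
  show ?thesis
  proof (cases "u \<in> set xs")
    case False
    have "path (u # xs)"
      unfolding path_def
    proof (intro conjI allI impI)
      fix i assume i: "Suc i < length (u # xs)"
      show "E ((u # xs) ! i) ((u # xs) ! Suc i)"
        using u(2) sym xs(1) i unfolding path_def by (cases i) auto
    qed (use False u xs(1) in \<open>auto simp: path_def\<close>)
    then have "has_path (Suc m)" unfolding has_path_def using xs(2) by force
    then show ?thesis using longest by fastforce
  next
    case True
    then obtain j where j: "j < length xs" "u = xs ! j" by (metis in_set_conv_nth)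
    have "j \<noteq> 0" using j u(2) irr by metis
    moreover have "j \<noteq> 1" using j u(3) by auto
    ultimately have "2 \<le> j" by linarith
    have "is_cycle_in S E (take (Suc j) xs)"
      unfolding is_cycle_in_def
    proof (intro conjI allI impI)
      have "last (take (Suc j) xs) = xs ! j" "hd (take (Suc j) xs) = xs ! 0"
        using j(1) by (subst last_conv_nth, auto, cases xs, auto)
      then show "E (last (take (Suc j) xs)) (hd (take (Suc j) xs))"
        using j(2) u(2) sym by simp
    qed (use xs(1) j \<open>2 \<le> j\<close> in \<open>auto simp: path_def dest: in_set_takeD\<close>)
    then show ?thesis by blast
  qed
qed

lemma degree_remove:
  assumes "finite S" and "v \<in> S"
  shows "degree S E w = degree (S - {v}) E w + (if E w v then 1 else 0)"
proof -
  have "{u \<in> S. E w u} = (if E w v then insert v else id) {u \<in> S - {v}. E w u}"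
    using assms(2) by auto
  then show ?thesis using assms(1) unfolding degree_def by simp
qed

lemma sum_degree_remove:
  assumes fin: "finite S" and v: "v \<in> S"
    and sym: "\<And>u v. E u v \<Longrightarrow> E v u" and irr: "\<And>v. \<not> E v v"
  shows "(\<Sum>w\<in>S. degree S E w) = (\<Sum>w\<in>S - {v}. degree (S - {v}) E w) + 2 * degree S E v"
proof -
  have "(\<Sum>w\<in>S. if E w v then 1 else 0) = card {w \<in> S. E w v}"
    using fin by (simp add: sum.inter_filter[symmetric])
  also have "\<dots> = degree S E v" unfolding degree_def using sym by metis
  finally have back_edges: "(\<Sum>w\<in>S. if E w v then 1 else 0) = degree S E v" .
  have "degree (S - {v}) E v = degree S E v"
    using degree_remove[OF fin v, of E v] irr by simp
  then have "(\<Sum>w\<in>S. degree (S - {v}) E w) = (\<Sum>w\<in>S - {v}. degree (S - {v}) E w) + degree S E v"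
    using fin v by (simp add: sum.remove)
  then show ?thesis
    using back_edges degree_remove[OF fin v, of E] by (simp add: sum.distrib)
qed

text \<open>Vertices of degree at most one are peeled off; they carry at most two units of the sum.\<close>

lemma has_cycle_if_degree_sum_ge:
  assumes "finite S" and sym: "\<And>u v. E u v \<Longrightarrow> E v u" and irr: "\<And>v. \<not> E v v"
    and "S \<noteq> {}" and "2 * card S \<le> (\<Sum>v\<in>S. degree S E v)"
  shows "\<exists>cs. is_cycle_in S E cs"
  using assms(1,4,5)
proof (induction "card S" arbitrary: S rule: less_induct)
  case less
  show ?case
  proof (cases "\<exists>v\<in>S. degree S E v \<le> 1")
    case False
    then show ?thesis using has_cycle_if_degree_ge_2[of S E] less.prems sym irr by force
  next
    case True
    then obtain v where v: "v \<in> S" "degree S E v \<le> 1" by auto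
    have card: "card S = Suc (card (S - {v}))"
      using card_Suc_Diff1[OF less.prems(1) v(1)] by simp
    have sum: "2 * card (S - {v}) \<le> (\<Sum>w\<in>S - {v}. degree (S - {v}) E w)"
      using less.prems(3) sum_degree_remove[OF less.prems(1) v(1), of E] sym irr v(2) card
      by simp
    have "S - {v} \<noteq> {}"
    proof
      assume "S - {v} = {}"
      then have "S = {v}" using v(1) by auto
      then show False using less.prems(3) v(2) by simp
    qed
    then obtain cs where "is_cycle_in (S - {v}) E cs"
      using less.hyps[of "S - {v}"] less.prems(1) card sum by auto
    then show ?thesis using is_cycle_in_mono by blast
  qed
qed

lemma min_degree_le_degree: "finite V \<Longrightarrow> x \<in> V \<Longrightarrow> min_degree V E \<le> degree V E x"
  unfolding min_degree_def by simp

lemma sum_degree_swap: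
  assumes "finite A" "finite B" and sym: "\<And>u v. E u v \<Longrightarrow> E v u"
  shows "(\<Sum>a\<in>A. degree B E a) = (\<Sum>b\<in>B. degree A E b)"
proof -
  have "(\<Sum>a\<in>A. degree B E a) = (\<Sum>a\<in>A. \<Sum>b\<in>B. if E a b then 1 else 0)"
    using assms(2) unfolding degree_def by (simp add: sum.inter_filter[symmetric])
  also have "\<dots> = (\<Sum>b\<in>B. \<Sum>a\<in>A. if E a b then 1 else 0)" by (rule sum.swap)
  also have "\<dots> = (\<Sum>b\<in>B. \<Sum>a\<in>A. if E b a then 1 else 0)"
    using sym by (intro sum.cong refl) metis
  also have "\<dots> = (\<Sum>b\<in>B. degree A E b)"
    using assms(1) unfolding degree_def by (simp add: sum.inter_filter[symmetric])
  finally show ?thesis .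
qed

lemma degree_le_degree_subset:
  assumes "finite Y" and "B \<subseteq> Y"
  shows "degree Y E x \<le> degree B E x + (card Y - card B)"
proof -
  have "finite B" using assms finite_subset by blast
  have "degree Y E x \<le> card ({u \<in> B. E x u} \<union> (Y - B))"
    unfolding degree_def using assms \<open>finite B\<close> by (intro card_mono) auto
  also have "\<dots> \<le> degree B E x + card (Y - B)" unfolding degree_def by (rule card_Un_le)
  finally show ?thesis using assms \<open>finite B\<close> by (simp add: card_Diff_subset)
qed

text \<open>For odd \<open>n\<close>, every degree other than \<open>(n + 1) / 2\<close> is at least \<open>(n + 3) / 2\<close>.\<close>

lemma sum_degree_ge_odd:
  fixes d :: "'a \<Rightarrow> nat"
  assumes "finite A" and "odd n" and ge: "\<And>x. x \<in> A \<Longrightarrow> n + 1 \<le> 2 * d x"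
    and few: "card {x \<in> A. 2 * d x = n + 1} \<le> 1"
  shows "card A * (n + 3) \<le> 2 * (\<Sum>x\<in>A. d x) + 2"
proof -
  define low where "low x = (if 2 * d x = n + 1 then 1 else 0 :: nat)" for x
  have "n + 3 \<le> 2 * d x + 2 * low x" if "x \<in> A" for x
    using ge[OF that] \<open>odd n\<close> unfolding low_def by presburger
  then have "(\<Sum>x\<in>A. n + 3) \<le> (\<Sum>x\<in>A. 2 * d x + 2 * low x)" by (rule sum_mono)
  also have "\<dots> = 2 * (\<Sum>x\<in>A. d x) + 2 * (\<Sum>x\<in>A. low x)"
    by (simp add: sum.distrib sum_distrib_left)
  also have "(\<Sum>x\<in>A. low x) = card {x \<in> A. 2 * d x = n + 1}"
    using \<open>finite A\<close> unfolding low_def by (simp add: sum.inter_filter[symmetric])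
  finally show ?thesis using few by simp
qed

text \<open>The slack is \<open>(s - 2)(n + 3 - 2 s) \<ge> 0\<close>.\<close>

lemma cross_edge_arith:
  fixes s l n D T :: nat
  assumes "s * (n + 3) \<le> 2 * T + 2" "T \<le> D + s * (n - l)" "s + l = n + 2" "2 * s \<le> n + 2"
    "l \<le> n"
  shows "n + 2 \<le> D"
proof -
  have "2 \<le> s" "n - l = s - 2" using assms(3,5) by linarith+
  have "int (s * (n + 3)) \<le> int (2 * T + 2)" "int T \<le> int (D + s * (n - l))"
    using assms(1,2) by (simp_all only: of_nat_le_iff)
  then have "int s * (int n + 3) \<le> 2 * int T + 2" "int T \<le> int D + int s * (int s - 2)"
    using \<open>n - l = s - 2\<close> \<open>2 \<le> s\<close> by simp_all
  moreover have "0 \<le> (int s - 2) * (int n + 3 - 2 * int s)" using \<open>2 \<le> s\<close> assms(4) by simp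
  ultimately show ?thesis by (simp add: algebra_simps)
qed

lemma balanced_bipartite_swap:
  "balanced_bipartite V1 V2 E n \<longleftrightarrow> balanced_bipartite V2 V1 E n"
  unfolding balanced_bipartite_def by (auto simp: Un_commute)

lemma balanced_bipartite_neighbour:
  "balanced_bipartite V1 V2 E n \<Longrightarrow> x \<in> V1 \<Longrightarrow> E x u \<Longrightarrow> u \<in> V2"
  unfolding balanced_bipartite_def by blast

lemma many_cross_edges:
  assumes G: "balanced_bipartite V1 V2 E n" and "odd n"
    and ge: "\<And>x. x \<in> V1 \<Longrightarrow> n + 1 \<le> 2 * degree (V1 \<union> V2) E x"
    and few: "card {x \<in> V1. 2 * degree (V1 \<union> V2) E x = n + 1} \<le> 1"
    and A: "A \<subseteq> V1" and B: "B \<subseteq> V2"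
    and card: "card A + card B = n + 2" and small: "2 * card A \<le> n + 2"
  shows "n + 2 \<le> (\<Sum>x\<in>A. degree B E x)"
proof -
  have fin: "finite V1" "finite V2" and c2: "card V2 = n"
    using G unfolding balanced_bipartite_def simple_graph_def by auto
  have finA: "finite A" using A fin finite_subset by blast
  have deg: "degree (V1 \<union> V2) E x = degree V2 E x" if "x \<in> A" for x
  proof -
    have "{u \<in> V1 \<union> V2. E x u} = {u \<in> V2. E x u}"
      using balanced_bipartite_neighbour[OF G] A that by blast
    then show ?thesis unfolding degree_def by simp
  qed
  have A_ge: "n + 1 \<le> 2 * degree V2 E x" if "x \<in> A" for x
    using ge[of x] A that deg[OF that] by auto
  have "card {x \<in> A. 2 * degree V2 E x = n + 1}
      \<le> card {x \<in> V1. 2 * degree (V1 \<union> V2) E x = n + 1}"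
    using A deg fin(1) by (intro card_mono) auto
  then have A_few: "card {x \<in> A. 2 * degree V2 E x = n + 1} \<le> 1" using few by linarith
  have sum_ge: "card A * (n + 3) \<le> 2 * (\<Sum>x\<in>A. degree V2 E x) + 2"
    by (rule sum_degree_ge_odd[OF finA \<open>odd n\<close> A_ge A_few])
  have "(\<Sum>x\<in>A. degree V2 E x) \<le> (\<Sum>x\<in>A. degree B E x + (n - card B))"
    using degree_le_degree_subset[OF fin(2) B] c2 by (intro sum_mono) auto
  then have sum_le: "(\<Sum>x\<in>A. degree V2 E x) \<le> (\<Sum>x\<in>A. degree B E x) + card A * (n - card B)"
    by (simp add: sum.distrib)
  have "card B \<le> n" using card_mono[OF fin(2) B] c2 by simp
  then show ?thesis by (rule cross_edge_arith[OF sum_ge sum_le card small])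
qed

lemma balanced_bipartite_has_cycle:
  assumes G: "balanced_bipartite V1 V2 E n" and "odd n"
    and ge: "\<And>x. x \<in> V1 \<union> V2 \<Longrightarrow> n + 1 \<le> 2 * degree (V1 \<union> V2) E x"
    and few1: "card {x \<in> V1. 2 * degree (V1 \<union> V2) E x = n + 1} \<le> 1"
    and few2: "card {x \<in> V2. 2 * degree (V1 \<union> V2) E x = n + 1} \<le> 1"
    and T: "T \<subseteq> V1 \<union> V2" "card T = n + 2"
  shows "\<exists>cs. is_cycle_in T E cs"
proof -
  have fin: "finite V1" "finite V2" and disj: "V1 \<inter> V2 = {}"
    and sym: "\<And>u v. E u v \<Longrightarrow> E v u" and irr: "\<And>v. \<not> E v v"
    using G unfolding balanced_bipartite_def simple_graph_def by auto
  note G' = balanced_bipartite_swap[THEN iffD1, OF G]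
  define A where "A = T \<inter> V1"
  define B where "B = T \<inter> V2"
  have finT: "finite T" using T(1) fin finite_subset by blast
  have finA: "finite A" and finB: "finite B" using finT A_def B_def by auto
  have TAB: "T = A \<union> B" "A \<inter> B = {}" using T(1) disj unfolding A_def B_def by auto
  have card: "card A + card B = n + 2"
    using T(2) card_Un_disjoint[OF finA finB TAB(2)] TAB(1) by simp
  have "{u \<in> T. E x u} = {u \<in> B. E x u}" if "x \<in> A" for x
    using balanced_bipartite_neighbour[OF G, of x] that unfolding A_def B_def by auto
  then have degA: "degree T E x = degree B E x" if "x \<in> A" for x
    using that unfolding degree_def by simp
  have "{u \<in> T. E x u} = {u \<in> A. E x u}" if "x \<in> B" for x
    using balanced_bipartite_neighbour[OF G', of x] that unfolding A_def B_def by auto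
  then have degB: "degree T E x = degree A E x" if "x \<in> B" for x
    using that unfolding degree_def by simp
  have "(\<Sum>x\<in>T. degree T E x) = (\<Sum>x\<in>A. degree T E x) + (\<Sum>x\<in>B. degree T E x)"
    using sum.union_disjoint[OF finA finB TAB(2), of "degree T E"] by (simp only: TAB(1)[symmetric])
  also have "\<dots> = (\<Sum>x\<in>A. degree B E x) + (\<Sum>x\<in>B. degree A E x)"
    using degA degB by simp
  also have "\<dots> = 2 * (\<Sum>x\<in>A. degree B E x)"
    using sum_degree_swap[OF finA finB sym] by simp
  finally have sum: "(\<Sum>x\<in>T. degree T E x) = 2 * (\<Sum>x\<in>A. degree B E x)" .
  have "A \<subseteq> V1" "B \<subseteq> V2" unfolding A_def B_def by auto
  have "n + 2 \<le> (\<Sum>x\<in>A. degree B E x)"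
  proof (cases "2 * card A \<le> n + 2")
    case True
    show ?thesis
      by (rule many_cross_edges[OF G \<open>odd n\<close> ge few1 \<open>A \<subseteq> V1\<close> \<open>B \<subseteq> V2\<close> card True]) simp
  next
    case False
    then have "2 * card B \<le> n + 2" using card by linarith
    then have "n + 2 \<le> (\<Sum>x\<in>B. degree A E x)"
      using many_cross_edges[OF G', unfolded Un_commute[of V2 V1]] \<open>odd n\<close> ge few2
        \<open>A \<subseteq> V1\<close> \<open>B \<subseteq> V2\<close> card
      by (simp add: add.commute)
    then show ?thesis using sum_degree_swap[OF finA finB sym] by simp
  qed
  moreover have "T \<noteq> {}" using T(2) by auto
  ultimately show ?thesis
    using has_cycle_if_degree_sum_ge[OF finT, of E] sym irr sum T(2) by simp
qed

lemma balanced_bipartite_induced_forest_card_le: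
  assumes G: "balanced_bipartite V1 V2 E n" and "odd n"
    and ge: "\<And>x. x \<in> V1 \<union> V2 \<Longrightarrow> n + 1 \<le> 2 * degree (V1 \<union> V2) E x"
    and few1: "card {x \<in> V1. 2 * degree (V1 \<union> V2) E x = n + 1} \<le> 1"
    and few2: "card {x \<in> V2. 2 * degree (V1 \<union> V2) E x = n + 1} \<le> 1"
    and S: "induces_forest (V1 \<union> V2) E S"
  shows "card S \<le> n + 1"
proof (rule ccontr)
  assume "\<not> card S \<le> n + 1"
  then obtain T where T: "T \<subseteq> S" "card T = n + 2"
    using obtain_subset_with_card_n[of "n + 2" S] by force
  moreover have "S \<subseteq> V1 \<union> V2" using S unfolding induces_forest_def by simp
  ultimately obtain cs where "is_cycle_in T E cs"
    using balanced_bipartite_has_cycle[OF G \<open>odd n\<close> ge few1 few2, of T] by auto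
  then have "is_cycle_in S E cs" using T(1) by (rule is_cycle_in_mono)
  then show False using S unfolding induces_forest_def by auto
qed

lemma balanced_bipartite_star_forest:
  assumes G: "balanced_bipartite V1 V2 E n" and "b \<in> V2"
  shows "induces_forest (V1 \<union> V2) E (insert b V1)"
proof -
  have "x = b \<or> y = b" if "x \<in> insert b V1" "y \<in> insert b V1" "E x y" for x y
    using that G unfolding balanced_bipartite_def by blast
  then have "\<not> is_cycle_in (insert b V1) E cs" for cs by (rule no_cycle_if_edges_through)
  moreover have "insert b V1 \<subseteq> V1 \<union> V2" using \<open>b \<in> V2\<close> by auto
  ultimately show ?thesis unfolding induces_forest_def by blast
qed

theorem theorem2p8:
  fixes V1 V2 :: "'a set" and E :: "'a \<Rightarrow> 'a \<Rightarrow> bool" and n :: nat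
  assumes "odd n" and "n > 0"
    and "balanced_bipartite V1 V2 E n"
    and "2 * min_degree (V1 \<union> V2) E \<ge> n + 1"
    and "card {v \<in> V1. 2 * degree (V1 \<union> V2) E v = n + 1} \<le> 1"
    and "card {u \<in> V2. 2 * degree (V1 \<union> V2) E u = n + 1} \<le> 1"
  shows "forest_number (V1 \<union> V2) E = n + 1"
proof -
  let ?V = "V1 \<union> V2" and ?F = "{S. induces_forest (V1 \<union> V2) E S}"
  have fin: "finite V1" "finite V2" and disj: "V1 \<inter> V2 = {}" and card: "card V1 = n" "card V2 = n"
    using assms(3) unfolding balanced_bipartite_def simple_graph_def by auto
  have ge: "n + 1 \<le> 2 * degree ?V E x" if "x \<in> ?V" for x
    using assms(4) min_degree_le_degree[of ?V x E] fin that by simp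
  have upper: "card S \<le> n + 1" if "S \<in> ?F" for S
    using balanced_bipartite_induced_forest_card_le[OF assms(3,1) ge assms(5,6)] that by simp
  obtain b where "b \<in> V2" using card(2) assms(2) by fastforce
  moreover have "b \<notin> V1" using \<open>b \<in> V2\<close> disj by auto
  ultimately have "insert b V1 \<in> ?F" "card (insert b V1) = n + 1"
    using balanced_bipartite_star_forest[OF assms(3)] fin(1) card(1) by auto
  moreover have "finite ?F" using fin unfolding induces_forest_def by (simp add: finite_subset)
  ultimately show ?thesis
    unfolding forest_number_def using upper by (intro Max_eqI) (auto intro: rev_image_eqI)
qed

end
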